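(* Let $Y=\{(x,y)\in\mathbb{R}^2:(x/a)^2+y^2=1\}$ with $1<a\le\sqrt2$, let $X\subseteq Y$ and $0<r<2$. Identify $Y$ with the circle $S^1$ via an orientation-preserving homeomorphism. Orient the edges of the 1-skeleton $\mathrm{VR}_<(X;r)$ by declaring $p\to p'$ iff $p'\in(p,g_r(p))_Y$, and those of $\mathrm{VR}_\le(X;r)$ by declaring $p\to p'$ iff $p'\in(p,g_r(p)]_Y$. Then both resulting directed graphs are cyclic graphs.
   Context: $d$ is the Euclidean metric. $Y$ is oriented clockwise; $(p,q)_Y$, $(p,q]_Y$, $[p,q]_Y$ denote clockwise arcs from $p$ to $q$, and $\prec$ the clockwise cyclic order (points distinct). $h^{-1}(p)$ denotes the point of $Y$ farthest from $p$; for $0<r<2$, $g_r(p)$ is the unique point $q\in[p,h^{-1}(p)]_Y$ with $d(p,q)=r$. $\mathrm{VR}_<(X;r)$ (resp. $\mathrm{VR}_\le(X;r)$) here denotes the graph on $X$ with an edge between points at distance $<r$ (resp. $\le r$). A directed graph with vertex set $V\subseteq S^1$ is cyclic if it has no loops and no opposite edge pairs, and whenever $v\to u$ is an edge, $v\to w$ and $w\to u$ are edges for all $w\in V$ with $v\prec w\prec u\prec v$. *)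

theory Defs
  imports "HOL-Analysis.Analysis"
begin

text \<open>Points of the plane are pairs of reals; dist on real \<times> real is the Euclidean metric.\<close>

definition ellipse :: "real \<Rightarrow> (real \<times> real) set" where
  "ellipse a = {(x, y). (x / a)^2 + y^2 = 1}"

text \<open>Clockwise parametrisation of the ellipse: (0,1) to (a,0) to (0,-1) to (-a,0).\<close>
definition ell_param :: "real \<Rightarrow> real \<Rightarrow> real \<times> real" where
  "ell_param a t = (a * sin t, cos t)"

definition cw_arc_open :: "real \<Rightarrow> real \<times> real \<Rightarrow> real \<times> real \<Rightarrow> (real \<times> real) set" where
  "cw_arc_open a p q = {z. \<exists>\<alpha> \<beta> s. ell_param a \<alpha> = p \<and> ell_param a (\<alpha> + \<beta>) = q
      \<and> 0 < \<beta> \<and> \<beta> \<le> 2 * pi \<and> 0 < s \<and> s < \<beta> \<and> z = ell_param a (\<alpha> + s)}"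

definition cw_arc_half :: "real \<Rightarrow> real \<times> real \<Rightarrow> real \<times> real \<Rightarrow> (real \<times> real) set" where
  "cw_arc_half a p q = {z. \<exists>\<alpha> \<beta> s. ell_param a \<alpha> = p \<and> ell_param a (\<alpha> + \<beta>) = q
      \<and> 0 < \<beta> \<and> \<beta> \<le> 2 * pi \<and> 0 < s \<and> s \<le> \<beta> \<and> z = ell_param a (\<alpha> + s)}"

definition cw_arc_closed :: "real \<Rightarrow> real \<times> real \<Rightarrow> real \<times> real \<Rightarrow> (real \<times> real) set" where
  "cw_arc_closed a p q = {z. \<exists>\<alpha> \<beta> s. ell_param a \<alpha> = p \<and> ell_param a (\<alpha> + \<beta>) = q
      \<and> 0 \<le> \<beta> \<and> \<beta> \<le> 2 * pi \<and> 0 \<le> s \<and> s \<le> \<beta> \<and> z = ell_param a (\<alpha> + s)}"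

definition farthest :: "real \<Rightarrow> real \<times> real \<Rightarrow> real \<times> real" where
  "farthest a p = (THE q. q \<in> ellipse a \<and> (\<forall>z \<in> ellipse a. dist p z \<le> dist p q))"

definition g_r :: "real \<Rightarrow> real \<Rightarrow> real \<times> real \<Rightarrow> real \<times> real" where
  "g_r a r p = (THE q. q \<in> cw_arc_closed a p (farthest a p) \<and> dist p q = r)"

definition VR_lt_dir :: "real \<Rightarrow> real \<Rightarrow> (real \<times> real) set \<Rightarrow> real \<times> real \<Rightarrow> real \<times> real \<Rightarrow> bool" where
  "VR_lt_dir a r X p p' \<longleftrightarrow> p \<in> X \<and> p' \<in> X \<and> p \<noteq> p' \<and> dist p p' < r
      \<and> p' \<in> cw_arc_open a p (g_r a r p)"

definition VR_le_dir :: "real \<Rightarrow> real \<Rightarrow> (real \<times> real) set \<Rightarrow> real \<times> real \<Rightarrow> real \<times> real \<Rightarrow> bool" where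
  "VR_le_dir a r X p p' \<longleftrightarrow> p \<in> X \<and> p' \<in> X \<and> p \<noteq> p' \<and> dist p p' \<le> r
      \<and> p' \<in> cw_arc_half a p (g_r a r p)"

text \<open>Cyclic directed graph with vertex set V on Y (with clockwise cyclic order).
  v \<prec> w \<prec> u \<prec> v for distinct points means w lies in the open clockwise arc (v,u)_Y.\<close>
definition cyclic_graph :: "real \<Rightarrow> (real \<times> real) set \<Rightarrow> (real \<times> real \<Rightarrow> real \<times> real \<Rightarrow> bool) \<Rightarrow> bool" where
  "cyclic_graph a V E \<longleftrightarrow>
     (\<forall>u v. E u v \<longrightarrow> u \<in> V \<and> v \<in> V) \<and>
     (\<forall>v. \<not> E v v) \<and>
     (\<forall>u v. \<not> (E v u \<and> E u v)) \<and>
     (\<forall>v u. E v u \<longrightarrow> (\<forall>w \<in> V. w \<in> cw_arc_open a v u \<longrightarrow> E v w \<and> E w u))"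

end

theory Submission
  imports Defs
begin

text \<open>For \<open>1 < a \<le> \<surd>2\<close> the squared distance from a point \<open>p\<close> of the ellipse, as a function of
  the clockwise parameter, is unimodal: a Lagrange multiplier computation shows that every stationary
  point is the unique farthest point \<open>h\<^sup>-\<^sup>1(p)\<close>. Hence \<open>g\<^sub>r(p)\<close> is the first point of the clockwise
  arc at distance \<open>r\<close>, and the out-neighbours of \<open>p\<close> in either graph are the points of the clockwise
  arc from \<open>p\<close> to \<open>g\<^sub>r(p)\<close>, whose parameter length is less than \<open>\<pi>\<close>; this excludes opposite
  edges. Unimodality seen from the far end of such an arc shows that moving \<open>p\<close> forward brings it
  closer to the later points of the arc, so \<open>g\<^sub>r(p)\<close> moves forward with \<open>p\<close>, which is the
  transitivity condition of a cyclic graph.\<close>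

section \<open>Farthest points on the ellipse\<close>

lemma proportional_if_cross_eq:
  fixes u1 u2 v1 v2 :: real
  assumes "u1 * v2 = u2 * v1" and "(v1, v2) \<noteq> (0, 0)"
  shows "\<exists>l. u1 = l * v1 \<and> u2 = l * v2"
proof -
  define l where "l = (u1 * v1 + u2 * v2) / (v1\<^sup>2 + v2\<^sup>2)"
  have "v1\<^sup>2 + v2\<^sup>2 > 0"
    using assms(2) by (auto intro: add_pos_nonneg add_nonneg_pos)
  then have pos: "v1\<^sup>2 + v2\<^sup>2 \<noteq> 0" by linarith
  have "u1 * (v1\<^sup>2 + v2\<^sup>2) = (u1 * v1 + u2 * v2) * v1"
    "u2 * (v1\<^sup>2 + v2\<^sup>2) = (u1 * v1 + u2 * v2) * v2"
    using assms(1) by (simp_all add: algebra_simps power2_eq_square)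
  then have "u1 = l * v1" "u2 = l * v2"
    using pos unfolding l_def by (simp_all add: nonzero_eq_divide_eq)
  then show ?thesis by blast
qed

text \<open>The point \<open>(x - l x/b, y - l y)\<close> is \<open>p - l \<nabla>\<close>, with \<open>\<nabla> = (x/b, y)\<close> the normal of
  \<open>x\<^sup>2/b + y\<^sup>2 = 1\<close> at \<open>p = (x, y)\<close>; it lies on the ellipse only for \<open>l = 2N/M\<close>, where
  \<open>N = x\<^sup>2/b\<^sup>2 + y\<^sup>2 \<ge> M = x\<^sup>2/b\<^sup>3 + y\<^sup>2\<close>.\<close>
lemma ellipse_normal_multiplier:
  fixes b x y l :: real
  assumes "1 < b" and "x\<^sup>2 / b + y\<^sup>2 = 1"
    and "(x - l * x / b)\<^sup>2 / b + (y - l * y)\<^sup>2 = 1" and "l \<noteq> 0"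
  shows "2 \<le> l \<and> (l = 2 \<longrightarrow> x = 0)"
proof -
  define N where "N = x\<^sup>2 / b\<^sup>2 + y\<^sup>2"
  define M where "M = x\<^sup>2 / b^3 + y\<^sup>2"
  have b0: "b > 0" using assms(1) by simp
  have "x \<noteq> 0 \<or> y \<noteq> 0" using assms(2) by auto
  then have M0: "M > 0"
    unfolding M_def using b0 by (auto intro: add_pos_nonneg add_nonneg_pos)
  have "b\<^sup>2 < b^3" using assms(1) by (simp add: power_strict_increasing)
  then have MN: "M \<le> N" and MN_eq: "M = N \<longleftrightarrow> x = 0"
    unfolding M_def N_def using b0 by (auto simp: frac_le divide_cancel_left)
  have "(x - l * x / b)\<^sup>2 / b + (y - l * y)\<^sup>2 = (x\<^sup>2 / b + y\<^sup>2) - 2 * l * N + l\<^sup>2 * M"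
    unfolding N_def M_def using b0
    by (simp add: field_simps power2_eq_square power3_eq_cube)
  then have "l\<^sup>2 * M - 2 * l * N = 0" using assms(2,3) by linarith
  then have "l * (l * M - 2 * N) = 0" by (simp add: power2_eq_square right_diff_distrib)
  then have lM: "l * M = 2 * N" using assms(4) by simp
  then have "2 * M \<le> l * M" using MN by simp
  then have "2 \<le> l" using M0 by simp
  moreover have "l = 2 \<longrightarrow> x = 0" using lM MN_eq by auto
  ultimately show ?thesis by blast
qed

lemma dist_pair_sq: "(dist (x0, y0) (x1, y1))\<^sup>2 = (x1 - x0)\<^sup>2 + (y1 - y0)\<^sup>2" for x0 y0 x1 y1 :: real
  by (simp add: dist_Pair_Pair dist_real_def power2_commute)

text \<open>On the ellipse the squared distance from \<open>p\<^sub>0 = p - l \<nabla>\<close> has no first-order term at \<open>p\<close>,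
  because \<open>p - p\<^sub>0\<close> is normal to the ellipse there.\<close>
lemma ellipse_dist_sq_expansion:
  fixes b l x y x0 y0 x1 y1 :: real
  assumes "b \<noteq> 0" and "x\<^sup>2 / b + y\<^sup>2 = 1" and "x1\<^sup>2 / b + y1\<^sup>2 = 1"
    and x0: "x0 = x - l * x / b" and y0: "y0 = y - l * y"
  shows "(x1 - x0)\<^sup>2 + (y1 - y0)\<^sup>2
    = (x - x0)\<^sup>2 + (y - y0)\<^sup>2 + (1 - l / b) * (x1 - x)\<^sup>2 + (1 - l) * (y1 - y)\<^sup>2"
proof -
  have "(x1 - x0)\<^sup>2 + (y1 - y0)\<^sup>2 - ((x - x0)\<^sup>2 + (y - y0)\<^sup>2)
      - ((1 - l / b) * (x1 - x)\<^sup>2 + (1 - l) * (y1 - y)\<^sup>2)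
    = l * (x1\<^sup>2 / b + y1\<^sup>2) - l * (x\<^sup>2 / b + y\<^sup>2)"
    unfolding x0 y0 using assms(1) by (simp add: field_simps power2_eq_square)
  then show ?thesis using assms(2,3) by simp
qed

text \<open>The multiplier satisfies \<open>l \<ge> 2 \<ge> a\<^sup>2\<close>, so both second-order terms of the expansion are
  nonpositive.\<close>
lemma ellipse_critical_point_farthest:
  fixes a x0 y0 x y :: real
  assumes a: "1 < a" "a\<^sup>2 \<le> 2"
    and on: "(x0, y0) \<in> ellipse a" "(x, y) \<in> ellipse a" "z \<in> ellipse a"
    and ne: "(x, y) \<noteq> (x0, y0)"
    and crit: "a\<^sup>2 * (x - x0) * y = (y - y0) * x"
  shows "dist (x0, y0) z \<le> dist (x0, y0) (x, y)
    \<and> (dist (x0, y0) z = dist (x0, y0) (x, y) \<longrightarrow> z = (x, y))"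
proof -
  obtain x1 y1 where z: "z = (x1, y1)" by (cases z)
  define b where "b = a\<^sup>2"
  have b: "1 < b" "b \<le> 2" using a unfolding b_def by (auto simp: less_1_mult power2_eq_square)
  have ell: "u\<^sup>2 / b + v\<^sup>2 = 1" if "(u, v) \<in> ellipse a" for u v
    using that unfolding ellipse_def b_def by (simp add: power_divide)
  have "(x / b, y) \<noteq> (0, 0)" using ell[OF on(2)] b by auto
  moreover have "(x - x0) * y = (y - y0) * (x / b)"
  proof -
    have "(y - y0) * (x / b) = b * (x - x0) * y / b" using crit unfolding b_def by simp
    then show ?thesis using b by simp
  qed
  ultimately obtain l where "x - x0 = l * (x / b)" "y - y0 = l * y"
    using proportional_if_cross_eq[of "x - x0" y "y - y0" "x / b"] by blast
  then have x0: "x0 = x - l * x / b" and y0: "y0 = y - l * y" and "l \<noteq> 0"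
    using ne by auto
  then have l2: "2 \<le> l" and l2_eq: "l = 2 \<longrightarrow> x = 0"
    using ellipse_normal_multiplier[OF b(1) ell[OF on(2)]] ell[OF on(1)] by auto
  have b0: "b \<noteq> 0" using b by simp
  note expansion = ellipse_dist_sq_expansion[OF b0 ell[OF on(2)] ell[OF on(3)[unfolded z]] x0 y0]
  have "1 - l / b \<le> 0" "1 - l \<le> 0" using l2 b by (simp_all add: field_simps)
  then have t1: "(1 - l / b) * (x1 - x)\<^sup>2 \<le> 0" and t2: "(1 - l) * (y1 - y)\<^sup>2 \<le> 0"
    by (simp_all add: mult_nonpos_nonneg)
  have le: "(x1 - x0)\<^sup>2 + (y1 - y0)\<^sup>2 \<le> (x - x0)\<^sup>2 + (y - y0)\<^sup>2"
    using expansion t1 t2 by linarith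
  have "x1 = x \<and> y1 = y" if eq: "(x1 - x0)\<^sup>2 + (y1 - y0)\<^sup>2 = (x - x0)\<^sup>2 + (y - y0)\<^sup>2"
  proof
    have e1: "(1 - l / b) * (x1 - x)\<^sup>2 = 0" and e2: "(1 - l) * (y1 - y)\<^sup>2 = 0"
      using expansion eq t1 t2 by linarith+
    from e2 l2 show y: "y1 = y" by simp
    show "x1 = x"
    proof (rule ccontr)
      assume "x1 \<noteq> x"
      with e1 have "l = b" using b by (simp add: field_simps)
      then have "x = 0" using l2 l2_eq b by simp
      moreover have "x1\<^sup>2 = x\<^sup>2"
        using ell[OF on(2)] ell[OF on(3)[unfolded z]] y b by (simp add: field_simps)
      ultimately show False using \<open>x1 \<noteq> x\<close> by simp
    qed
  qed
  then show ?thesis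
    unfolding z using le dist_pair_sq[of x0 y0 x1 y1] dist_pair_sq[of x0 y0 x y]
    by (metis power2_le_imp_le zero_le_dist)
qed

lemma farthest_eqI:
  assumes "q \<in> ellipse a"
    and "\<And>z. z \<in> ellipse a \<Longrightarrow> dist p z \<le> dist p q \<and> (dist p z = dist p q \<longrightarrow> z = q)"
  shows "farthest a p = q"
  unfolding farthest_def
proof (rule the_equality)
  show "q \<in> ellipse a \<and> (\<forall>z\<in>ellipse a. dist p z \<le> dist p q)" using assms by blast
next
  fix q' assume q': "q' \<in> ellipse a \<and> (\<forall>z\<in>ellipse a. dist p z \<le> dist p q')"
  then have "dist p q \<le> dist p q'" using assms(1) by blast
  moreover have "dist p q' \<le> dist p q \<and> (dist p q' = dist p q \<longrightarrow> q' = q)"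
    using assms(2) q' by blast
  ultimately show "q' = q" by linarith
qed

section \<open>The clockwise parametrisation\<close>

lemma ell_param_in_ellipse: "a \<noteq> 0 \<Longrightarrow> ell_param a t \<in> ellipse a"
  by (simp add: ell_param_def ellipse_def)

lemma ell_param_surj:
  assumes "a \<noteq> 0" and "p \<in> ellipse a"
  obtains t where "ell_param a t = p"
proof -
  obtain x y where p: "p = (x, y)" by (cases p)
  have "y\<^sup>2 + (x / a)\<^sup>2 = 1" using assms(2) p by (simp add: ellipse_def)
  then obtain t where "y = cos t" "x / a = sin t" using sincos_total_2pi by metis
  then have "ell_param a t = p" using p assms(1) by (simp add: ell_param_def field_simps)
  then show thesis using that by blast
qed

lemma ell_param_eq_iff: "a \<noteq> 0 \<Longrightarrow> ell_param a u = ell_param a v \<longleftrightarrow> sin u = sin v \<and> cos u = cos v"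
  by (auto simp: ell_param_def)

lemma ell_param_shift:
  assumes "a \<noteq> 0" and "ell_param a \<alpha>' = ell_param a \<alpha>"
  shows "ell_param a (\<alpha>' + s) = ell_param a (\<alpha> + s)"
  using assms by (simp add: ell_param_eq_iff sin_add cos_add)

lemma ell_param_add_2pi: "ell_param a (t + 2 * pi) = ell_param a t"
  by (simp add: ell_param_def)

lemma ell_param_inj:
  assumes "a \<noteq> 0" and "ell_param a u = ell_param a v" and "\<bar>u - v\<bar> < 2 * pi"
  shows "u = v"
proof -
  have "cos (u - v) = 1" using assms(1,2) by (simp add: ell_param_eq_iff cos_diff)
  then obtain n :: int where n: "u - v = real_of_int n * 2 * pi" using cos_one_2pi_int by blast
  then have "\<bar>real_of_int n\<bar> * (2 * pi) < 1 * (2 * pi)" using assms(3) by (simp add: abs_mult)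
  then have "n = 0" by simp
  then show ?thesis using n by simp
qed

lemma ell_param_add_neq:
  assumes "a \<noteq> 0" and "0 < t" and "t < 2 * pi"
  shows "ell_param a (\<alpha> + t) \<noteq> ell_param a \<alpha>"
  using ell_param_inj[OF assms(1), of "\<alpha> + t" \<alpha>] assms(2,3) by auto

lemma ell_param_arc_end_unique:
  assumes "a \<noteq> 0" and "ell_param a \<alpha>' = ell_param a \<alpha>"
    and "ell_param a (\<alpha>' + \<beta>) = ell_param a (\<alpha> + \<gamma>)"
    and "0 \<le> \<beta>" "\<beta> \<le> 2 * pi" "0 < \<gamma>" "\<gamma> < 2 * pi"
  shows "\<beta> = \<gamma>"
proof -
  have "ell_param a (\<alpha> + \<beta>) = ell_param a (\<alpha> + \<gamma>)"
    using assms(3) ell_param_shift[OF assms(1,2)] by simp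
  moreover have "\<bar>(\<alpha> + \<beta>) - (\<alpha> + \<gamma>)\<bar> < 2 * pi" using assms(4-7) by simp
  ultimately show ?thesis using ell_param_inj[OF assms(1)] by force
qed

lemma cw_arc_open_ell_param:
  assumes "a \<noteq> 0" and "0 < \<gamma>" "\<gamma> < 2 * pi"
  shows "z \<in> cw_arc_open a (ell_param a \<alpha>) (ell_param a (\<alpha> + \<gamma>))
    \<longleftrightarrow> (\<exists>s. 0 < s \<and> s < \<gamma> \<and> z = ell_param a (\<alpha> + s))"
proof
  assume "z \<in> cw_arc_open a (ell_param a \<alpha>) (ell_param a (\<alpha> + \<gamma>))"
  then obtain \<alpha>' \<beta> s where w: "ell_param a \<alpha>' = ell_param a \<alpha>"
      "ell_param a (\<alpha>' + \<beta>) = ell_param a (\<alpha> + \<gamma>)"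
      "0 < \<beta>" "\<beta> \<le> 2 * pi" "0 < s" "s < \<beta>" "z = ell_param a (\<alpha>' + s)"
    unfolding cw_arc_open_def by blast
  then show "\<exists>s. 0 < s \<and> s < \<gamma> \<and> z = ell_param a (\<alpha> + s)"
    using ell_param_arc_end_unique[OF assms(1) w(1,2)] ell_param_shift[OF assms(1) w(1)] assms
    by auto
next
  assume "\<exists>s. 0 < s \<and> s < \<gamma> \<and> z = ell_param a (\<alpha> + s)"
  then show "z \<in> cw_arc_open a (ell_param a \<alpha>) (ell_param a (\<alpha> + \<gamma>))"
    unfolding cw_arc_open_def using assms by fastforce
qed

lemma cw_arc_half_ell_param:
  assumes "a \<noteq> 0" and "0 < \<gamma>" "\<gamma> < 2 * pi"
  shows "z \<in> cw_arc_half a (ell_param a \<alpha>) (ell_param a (\<alpha> + \<gamma>))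
    \<longleftrightarrow> (\<exists>s. 0 < s \<and> s \<le> \<gamma> \<and> z = ell_param a (\<alpha> + s))"
proof
  assume "z \<in> cw_arc_half a (ell_param a \<alpha>) (ell_param a (\<alpha> + \<gamma>))"
  then obtain \<alpha>' \<beta> s where w: "ell_param a \<alpha>' = ell_param a \<alpha>"
      "ell_param a (\<alpha>' + \<beta>) = ell_param a (\<alpha> + \<gamma>)"
      "0 < \<beta>" "\<beta> \<le> 2 * pi" "0 < s" "s \<le> \<beta>" "z = ell_param a (\<alpha>' + s)"
    unfolding cw_arc_half_def by blast
  then show "\<exists>s. 0 < s \<and> s \<le> \<gamma> \<and> z = ell_param a (\<alpha> + s)"
    using ell_param_arc_end_unique[OF assms(1) w(1,2)] ell_param_shift[OF assms(1) w(1)] assms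
    by auto
next
  assume "\<exists>s. 0 < s \<and> s \<le> \<gamma> \<and> z = ell_param a (\<alpha> + s)"
  then show "z \<in> cw_arc_half a (ell_param a \<alpha>) (ell_param a (\<alpha> + \<gamma>))"
    unfolding cw_arc_half_def using assms by fastforce
qed

section \<open>Chord length along the ellipse\<close>

definition chord_sq :: "real \<Rightarrow> real \<Rightarrow> real \<Rightarrow> real" where
  "chord_sq a \<alpha> \<delta> = (dist (ell_param a \<alpha>) (ell_param a (\<alpha> + \<delta>)))\<^sup>2"

lemma chord_sq_eq: "chord_sq a \<alpha> \<delta> = (a * sin (\<alpha> + \<delta>) - a * sin \<alpha>)\<^sup>2 + (cos (\<alpha> + \<delta>) - cos \<alpha>)\<^sup>2"
  by (simp add: chord_sq_def ell_param_def dist_pair_sq)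

lemma chord_sq_nonneg: "0 \<le> chord_sq a \<alpha> \<delta>"
  by (simp add: chord_sq_def)

lemma dist_ell_param_less_iff:
  "0 \<le> r \<Longrightarrow> dist (ell_param a \<alpha>) (ell_param a (\<alpha> + \<delta>)) < r \<longleftrightarrow> chord_sq a \<alpha> \<delta> < r\<^sup>2"
  unfolding chord_sq_def by (metis abs_le_square_iff abs_of_nonneg zero_le_dist not_le)

lemma dist_ell_param_le_iff:
  "0 \<le> r \<Longrightarrow> dist (ell_param a \<alpha>) (ell_param a (\<alpha> + \<delta>)) \<le> r \<longleftrightarrow> chord_sq a \<alpha> \<delta> \<le> r\<^sup>2"
  unfolding chord_sq_def by (metis abs_le_square_iff abs_of_nonneg zero_le_dist)

lemma chord_sq_0: "chord_sq a \<alpha> 0 = 0"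
  by (simp add: chord_sq_def)

lemma chord_sq_2pi: "chord_sq a \<alpha> (2 * pi) = 0"
  by (simp add: chord_sq_eq)

lemma chord_sq_pi_ge_4:
  assumes "1 \<le> a"
  shows "4 \<le> chord_sq a \<alpha> pi"
proof -
  have "chord_sq a \<alpha> pi = 4 * (a\<^sup>2 * (sin \<alpha>)\<^sup>2 + (cos \<alpha>)\<^sup>2)"
    by (simp add: chord_sq_eq power2_eq_square algebra_simps)
  moreover have "(sin \<alpha>)\<^sup>2 \<le> a\<^sup>2 * (sin \<alpha>)\<^sup>2"
    using assms by (simp add: mult_le_cancel_right1 one_le_power)
  then have "4 * ((sin \<alpha>)\<^sup>2 + (cos \<alpha>)\<^sup>2) \<le> 4 * (a\<^sup>2 * (sin \<alpha>)\<^sup>2 + (cos \<alpha>)\<^sup>2)"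
    by (intro mult_left_mono add_right_mono) simp_all
  ultimately show ?thesis by (simp only: sin_cos_squared_add mult_1_right)
qed

lemma continuous_on_chord_sq: "continuous_on S (chord_sq a \<alpha>)"
  unfolding chord_sq_eq[abs_def] by (intro continuous_intros)

lemma has_real_derivative_chord_sq:
  "(chord_sq a \<alpha> has_real_derivative
      2 * (a * sin (\<alpha> + t) - a * sin \<alpha>) * (a * cos (\<alpha> + t))
    - 2 * (cos (\<alpha> + t) - cos \<alpha>) * sin (\<alpha> + t)) (at t)"
proof -
  have "chord_sq a \<alpha> = (\<lambda>\<delta>. (a * sin (\<alpha> + \<delta>) - a * sin \<alpha>)\<^sup>2 + (cos (\<alpha> + \<delta>) - cos \<alpha>)\<^sup>2)"
    by (simp add: chord_sq_eq fun_eq_iff)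
  then show ?thesis
    by (auto intro!: derivative_eq_intros simp: algebra_simps)
qed

lemma chord_sq_reverse: "chord_sq a (\<alpha> + t) (2 * pi - t) = chord_sq a \<alpha> t"
proof -
  have "ell_param a (\<alpha> + t + (2 * pi - t)) = ell_param a \<alpha>"
    using ell_param_add_2pi[of a \<alpha>] by simp
  then show ?thesis by (simp add: chord_sq_def dist_commute)
qed

lemma chord_sq_critical_farthest:
  assumes a: "1 < a" "a\<^sup>2 \<le> 2"
    and crit: "(chord_sq a \<alpha> has_real_derivative 0) (at t)" and t: "0 < t" "t < 2 * pi"
  shows "farthest a (ell_param a \<alpha>) = ell_param a (\<alpha> + t)"
proof -
  have a0: "a \<noteq> 0" using a by simp
  define x0 y0 x y where "x0 = a * sin \<alpha>" "y0 = cos \<alpha>" "x = a * sin (\<alpha> + t)" "y = cos (\<alpha> + t)"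
  have p: "ell_param a \<alpha> = (x0, y0)" "ell_param a (\<alpha> + t) = (x, y)"
    by (simp_all add: ell_param_def x0_y0_x_y_def)
  have "2 * (a * sin (\<alpha> + t) - a * sin \<alpha>) * (a * cos (\<alpha> + t))
      - 2 * (cos (\<alpha> + t) - cos \<alpha>) * sin (\<alpha> + t) = 0"
    using DERIV_unique[OF has_real_derivative_chord_sq crit] .
  then have "2 * ((x - x0) * (a * cos (\<alpha> + t)) - (y - y0) * sin (\<alpha> + t)) = 0"
    unfolding x0_y0_x_y_def by (simp add: algebra_simps)
  then have "a * ((x - x0) * (a * cos (\<alpha> + t))) = a * ((y - y0) * sin (\<alpha> + t))"
    by simp
  then have crit_xy: "a\<^sup>2 * (x - x0) * y = (y - y0) * x"
    unfolding x0_y0_x_y_def by (simp add: algebra_simps power2_eq_square)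
  have on: "(x0, y0) \<in> ellipse a" "(x, y) \<in> ellipse a"
    using ell_param_in_ellipse[OF a0] p by metis+
  have ne: "(x, y) \<noteq> (x0, y0)" using ell_param_add_neq[OF a0 t, of \<alpha>] unfolding p .
  show ?thesis
    unfolding p by (rule farthest_eqI[OF on(2) ellipse_critical_point_farthest[OF a on _ ne crit_xy]])
qed

lemma inj_on_if_no_stationary_point:
  fixes f :: "real \<Rightarrow> real"
  assumes "continuous_on {u..v} f" and "\<And>x. f differentiable (at x)"
    and "\<And>z. u < z \<Longrightarrow> z < v \<Longrightarrow> \<not> (f has_real_derivative 0) (at z)"
  shows "inj_on f {u..v}"
proof (rule inj_onI, rule ccontr)
  fix x y assume xy: "x \<in> {u..v}" "y \<in> {u..v}" "f x = f y" and "x \<noteq> y"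
  then have lt: "min x y < max x y" by linarith
  have "f (min x y) = f (max x y)" using xy(3) by (simp add: min_def max_def)
  moreover have "continuous_on {min x y..max x y} f"
    using xy by (intro continuous_on_subset[OF assms(1)]) auto
  ultimately obtain z where z: "min x y < z" "z < max x y" "(f has_real_derivative 0) (at z)"
    using Rolle[OF lt] assms(2) by blast
  moreover have "u < z" "z < v" using z(1,2) xy(1,2) by auto
  ultimately show False using assms(3) by blast
qed

lemma continuous_inj_imp_strict_mono_on:
  fixes f :: "real \<Rightarrow> real"
  assumes "continuous_on {u..v} f" "inj_on f {u..v}" and "\<And>t. t \<in> {u..v} \<Longrightarrow> f u \<le> f t"
  shows "strict_mono_on {u..v} f"
proof (rule strict_mono_onI)
  fix x y assume xy: "x \<in> {u..v}" "y \<in> {u..v}" "x < y"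
  have fy: "f u < f y"
    using assms(3)[OF xy(2)] inj_on_eq_iff[OF assms(2), of u y] xy by fastforce
  show "f x < f y"
  proof (cases "x = u")
    case False
    then have "u < x" using xy by simp
    moreover have "continuous_on {u..y} f" "inj_on f {u..y}"
      using xy by (auto intro: continuous_on_subset[OF assms(1)] inj_on_subset[OF assms(2)])
    ultimately show ?thesis using continuous_inj_imp_mono[of u x y f] xy(3) fy by auto
  qed (use fy in simp)
qed

lemma continuous_inj_imp_strict_antimono_on:
  fixes f :: "real \<Rightarrow> real"
  assumes "continuous_on {u..v} f" "inj_on f {u..v}" and "\<And>t. t \<in> {u..v} \<Longrightarrow> f v \<le> f t"
  shows "strict_antimono_on {u..v} f"
proof (rule monotone_onI)
  fix x y assume xy: "x \<in> {u..v}" "y \<in> {u..v}" "x < y"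
  have fx: "f v < f x"
    using assms(3)[OF xy(1)] inj_on_eq_iff[OF assms(2), of v x] xy by fastforce
  show "f y < f x"
  proof (cases "y = v")
    case False
    then have "y < v" using xy by simp
    moreover have "continuous_on {x..v} f" "inj_on f {x..v}"
      using xy by (auto intro: continuous_on_subset[OF assms(1)] inj_on_subset[OF assms(2)])
    ultimately show ?thesis using continuous_inj_imp_mono[of x y v f] xy(3) fx by auto
  qed (use fx in simp)
qed

text \<open>Every stationary point of the chord length in \<open>(0, 2\<pi>)\<close> is the farthest point, so there is
  only one.\<close>
lemma chord_sq_unimodal:
  assumes a: "1 < a" "a\<^sup>2 \<le> 2"
  obtains D where "0 < D" "D < 2 * pi" "farthest a (ell_param a \<alpha>) = ell_param a (\<alpha> + D)"
    "4 \<le> chord_sq a \<alpha> D"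
    "strict_mono_on {0..D} (chord_sq a \<alpha>)" "strict_antimono_on {D..2 * pi} (chord_sq a \<alpha>)"
proof -
  let ?f = "chord_sq a \<alpha>"
  have a0: "a \<noteq> 0" using a by simp
  obtain D where D: "D \<in> {0..2 * pi}" "\<And>t. t \<in> {0..2 * pi} \<Longrightarrow> ?f t \<le> ?f D"
    using continuous_attains_sup[of "{0..2 * pi}" ?f] continuous_on_chord_sq by auto
  have D4: "4 \<le> ?f D" using D(2)[of pi] chord_sq_pi_ge_4[of a \<alpha>] a by simp
  then have "D \<noteq> 0" "D \<noteq> 2 * pi" using chord_sq_0 chord_sq_2pi by auto
  then have D0: "0 < D" and D2: "D < 2 * pi" using D(1) by auto
  have "\<forall>y. \<bar>D - y\<bar> < min D (2 * pi - D) \<longrightarrow> ?f y \<le> ?f D"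
    using D(2) by (auto simp: abs_if)
  then have "(?f has_real_derivative 0) (at D)"
    using has_real_derivative_chord_sq[of a \<alpha> D]
      DERIV_local_max[OF has_real_derivative_chord_sq, of "min D (2 * pi - D)"] D0 D2 by simp
  then have far: "farthest a (ell_param a \<alpha>) = ell_param a (\<alpha> + D)"
    using chord_sq_critical_farthest[OF a _ D0 D2] by blast
  have stationary: "z = D" if "0 < z" "z < 2 * pi" "(?f has_real_derivative 0) (at z)" for z
  proof -
    have "ell_param a (\<alpha> + z) = ell_param a (\<alpha> + D)"
      using chord_sq_critical_farthest[OF a that(3,1,2)] far by simp
    then show ?thesis using ell_param_inj[OF a0, of "\<alpha> + z" "\<alpha> + D"] that D0 D2 by auto
  qed
  have diff: "?f differentiable (at x)" for x
    using has_real_derivative_chord_sq real_differentiable_def by blast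
  have "inj_on ?f {0..D}"
    by (rule inj_on_if_no_stationary_point[OF continuous_on_chord_sq diff])
      (use stationary D2 in force)
  moreover have "inj_on ?f {D..2 * pi}"
  proof (rule inj_on_if_no_stationary_point[OF continuous_on_chord_sq diff])
    fix z assume "D < z" "z < 2 * pi"
    then show "\<not> (?f has_real_derivative 0) (at z)" using stationary[of z] D0 by auto
  qed
  ultimately have "strict_mono_on {0..D} ?f" "strict_antimono_on {D..2 * pi} ?f"
    by (simp_all add: continuous_inj_imp_strict_mono_on continuous_inj_imp_strict_antimono_on
        continuous_on_chord_sq chord_sq_0 chord_sq_2pi chord_sq_nonneg)
  then show thesis using that D0 D2 far D4 by blast
qed

section \<open>The point \<open>g\<^sub>r(p)\<close>\<close>

text \<open>For \<open>1 < a \<le> \<surd>2\<close> and \<open>0 < r < 2\<close>, \<open>\<gamma>\<close> is the parameter offset of \<open>g\<^sub>r(ell_param a \<alpha>)\<close>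
  from \<open>\<alpha>\<close>.\<close>
definition first_reach_angle :: "real \<Rightarrow> real \<Rightarrow> real \<Rightarrow> real \<Rightarrow> bool" where
  "first_reach_angle a r \<alpha> \<gamma> \<longleftrightarrow>
     0 < \<gamma> \<and> chord_sq a \<alpha> \<gamma> = r\<^sup>2 \<and> (\<forall>s. 0 < s \<longrightarrow> s < \<gamma> \<longrightarrow> chord_sq a \<alpha> s < r\<^sup>2)"

lemma first_reach_angle_le:
  assumes "first_reach_angle a r \<alpha> \<gamma>" and "0 < s" "s \<le> \<gamma>"
  shows "chord_sq a \<alpha> s \<le> r\<^sup>2"
  using assms unfolding first_reach_angle_def by (cases "s = \<gamma>") (simp_all add: less_imp_le)

lemma first_reach_angle_less_pi:
  assumes "1 \<le> a" "0 \<le> r" "r < 2" and "first_reach_angle a r \<alpha> \<gamma>"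
  shows "\<gamma> < pi"
proof -
  have "r\<^sup>2 < 4" using assms(2,3) power_strict_mono[of r 2 2] by simp
  show ?thesis
  proof (rule ccontr)
    assume "\<not> \<gamma> < pi"
    then have "chord_sq a \<alpha> pi \<le> r\<^sup>2" using first_reach_angle_le[OF assms(4)] pi_gt_zero by simp
    then show False using \<open>r\<^sup>2 < 4\<close> chord_sq_pi_ge_4[OF assms(1), of \<alpha>] by linarith
  qed
qed

lemma first_reach_angle_exists:
  assumes a: "1 < a" "a\<^sup>2 \<le> 2" and r: "0 < r" "r < 2"
  obtains \<gamma> where "first_reach_angle a r \<alpha> \<gamma>"
proof -
  obtain D where D: "0 < D" "4 \<le> chord_sq a \<alpha> D" "strict_mono_on {0..D} (chord_sq a \<alpha>)"
    using chord_sq_unimodal[OF a] by metis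
  have "r\<^sup>2 < 4" using r power_strict_mono[of r 2 2] by simp
  then obtain \<gamma> where \<gamma>: "0 \<le> \<gamma>" "\<gamma> \<le> D" "chord_sq a \<alpha> \<gamma> = r\<^sup>2"
    using IVT'[of "chord_sq a \<alpha>" 0 "r\<^sup>2" D] D(1,2) continuous_on_chord_sq chord_sq_0 by force
  have "0 < \<gamma>" using \<gamma> chord_sq_0[of a \<alpha>] r by (cases "\<gamma> = 0") auto
  moreover have "chord_sq a \<alpha> s < r\<^sup>2" if "0 < s" "s < \<gamma>" for s
    using strict_mono_onD[OF D(3), of s \<gamma>] that \<gamma> by simp
  ultimately show thesis using that \<gamma>(3) unfolding first_reach_angle_def by blast
qed

lemma g_r_eq_first_reach:
  assumes a: "1 < a" "a\<^sup>2 \<le> 2" and r: "0 < r" "r < 2"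
    and \<gamma>: "first_reach_angle a r \<alpha> \<gamma>"
  shows "g_r a r (ell_param a \<alpha>) = ell_param a (\<alpha> + \<gamma>)"
proof -
  have a0: "a \<noteq> 0" using a by simp
  have r4: "r\<^sup>2 < 4" using r power_strict_mono[of r 2 2] by simp
  obtain D where D: "0 < D" "D < 2 * pi" "farthest a (ell_param a \<alpha>) = ell_param a (\<alpha> + D)"
    "4 \<le> chord_sq a \<alpha> D" "strict_mono_on {0..D} (chord_sq a \<alpha>)"
    using chord_sq_unimodal[OF a] by metis
  have \<gamma>D: "\<gamma> < D"
  proof (rule ccontr)
    assume "\<not> \<gamma> < D"
    then have "chord_sq a \<alpha> D \<le> r\<^sup>2" using first_reach_angle_le[OF \<gamma> D(1)] by simp
    then show False using D(4) r4 by linarith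
  qed
  have \<gamma>0: "0 < \<gamma>" and \<gamma>r: "chord_sq a \<alpha> \<gamma> = r\<^sup>2"
    using \<gamma> unfolding first_reach_angle_def by simp_all
  have unique: "s = \<gamma>" if "s \<in> {0..D}" "chord_sq a \<alpha> s = r\<^sup>2" for s
    using inj_onD[OF strict_mono_on_imp_inj_on[OF D(5)], of s \<gamma>] that \<gamma>0 \<gamma>D \<gamma>r by simp
  have dist_r: "dist (ell_param a \<alpha>) (ell_param a (\<alpha> + s)) = r \<longleftrightarrow> chord_sq a \<alpha> s = r\<^sup>2" for s
    using r(1) by (auto simp: chord_sq_def)
  show ?thesis
    unfolding g_r_def D(3)
  proof (rule the_equality)
    show "ell_param a (\<alpha> + \<gamma>) \<in> cw_arc_closed a (ell_param a \<alpha>) (ell_param a (\<alpha> + D))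
      \<and> dist (ell_param a \<alpha>) (ell_param a (\<alpha> + \<gamma>)) = r"
      unfolding cw_arc_closed_def mem_Collect_eq dist_r
      by (intro conjI exI[of _ \<alpha>] exI[of _ D] exI[of _ \<gamma>]) (use \<gamma>0 \<gamma>D \<gamma>r D(2) in auto)
  next
    fix q assume q: "q \<in> cw_arc_closed a (ell_param a \<alpha>) (ell_param a (\<alpha> + D))
      \<and> dist (ell_param a \<alpha>) q = r"
    then obtain \<alpha>' \<beta> s where w: "ell_param a \<alpha>' = ell_param a \<alpha>"
      "ell_param a (\<alpha>' + \<beta>) = ell_param a (\<alpha> + D)"
      "0 \<le> \<beta>" "\<beta> \<le> 2 * pi" "0 \<le> s" "s \<le> \<beta>" "q = ell_param a (\<alpha>' + s)"
      unfolding cw_arc_closed_def by blast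
    have "\<beta> = D" using ell_param_arc_end_unique[OF a0 w(1,2,3,4) D(1,2)] .
    moreover have qs: "q = ell_param a (\<alpha> + s)" using w(7) ell_param_shift[OF a0 w(1)] by simp
    ultimately have "s = \<gamma>" using unique[of s] w(5,6) q dist_r[of s] by simp
    then show "q = ell_param a (\<alpha> + \<gamma>)" using qs by simp
  qed
qed

text \<open>Seen from the endpoint \<open>\<alpha> + t\<close>, the chords back to \<open>\<alpha>\<close> and \<open>\<alpha> + s\<close> lie on the decreasing
  branch of the unimodal chord length.\<close>
lemma chord_sq_shift_less:
  assumes a: "1 < a" "a\<^sup>2 \<le> 2" and st: "0 < s" "s < t" "t < pi" and t4: "chord_sq a \<alpha> t < 4"
  shows "chord_sq a (\<alpha> + s) (t - s) < chord_sq a \<alpha> t"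
proof -
  obtain D where D: "4 \<le> chord_sq a (\<alpha> + t) D" "strict_mono_on {0..D} (chord_sq a (\<alpha> + t))"
    "strict_antimono_on {D..2 * pi} (chord_sq a (\<alpha> + t))"
    using chord_sq_unimodal[OF a] by metis
  have rev_t: "chord_sq a (\<alpha> + t) (2 * pi - t) = chord_sq a \<alpha> t"
    using chord_sq_reverse[of a \<alpha> t] .
  have "chord_sq a (\<alpha> + t) (2 * pi - (t - s)) = chord_sq a (\<alpha> + s) (t - s)"
    using chord_sq_reverse[of a "\<alpha> + s" "t - s"] by simp
  moreover have "D \<le> 2 * pi - t"
  proof (rule ccontr)
    assume "\<not> D \<le> 2 * pi - t"
    then have "chord_sq a (\<alpha> + t) pi < chord_sq a (\<alpha> + t) (2 * pi - t)"
      using strict_mono_onD[OF D(2), of pi "2 * pi - t"] st pi_gt_zero by simp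
    then show False using rev_t t4 chord_sq_pi_ge_4[of a "\<alpha> + t"] a by simp
  qed
  then have "chord_sq a (\<alpha> + t) (2 * pi - (t - s)) < chord_sq a (\<alpha> + t) (2 * pi - t)"
    using monotone_onD[OF D(3), of "2 * pi - t" "2 * pi - (t - s)"] st by simp
  ultimately show ?thesis using rev_t by simp
qed

lemma first_reach_angle_advance:
  assumes a: "1 < a" "a\<^sup>2 \<le> 2" and r: "0 < r" "r < 2"
    and \<gamma>: "first_reach_angle a r \<alpha> \<gamma>" and \<gamma>': "first_reach_angle a r (\<alpha> + s) \<gamma>'"
    and s: "0 < s" "s < \<gamma>"
  shows "\<gamma> < s + \<gamma>'"
proof (rule ccontr)
  assume "\<not> \<gamma> < s + \<gamma>'"
  moreover have "0 < s + \<gamma>'" using \<gamma>' s unfolding first_reach_angle_def by simp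
  ultimately have "chord_sq a \<alpha> (s + \<gamma>') \<le> r\<^sup>2" using first_reach_angle_le[OF \<gamma>] by simp
  moreover have "r\<^sup>2 < 4" using r power_strict_mono[of r 2 2] by simp
  moreover have "\<gamma> < pi" using first_reach_angle_less_pi[OF _ _ r(2) \<gamma>] a r by simp
  ultimately have "chord_sq a (\<alpha> + s) \<gamma>' < r\<^sup>2"
    using chord_sq_shift_less[OF a s(1), of "s + \<gamma>'" \<alpha>] \<gamma>' \<open>\<not> \<gamma> < s + \<gamma>'\<close>
    unfolding first_reach_angle_def by simp
  then show False using \<gamma>' unfolding first_reach_angle_def by simp
qed

lemma VR_lt_dir_ell_param:
  assumes a: "1 < a" "a\<^sup>2 \<le> 2" and r: "0 < r" "r < 2"
    and \<gamma>: "first_reach_angle a r \<alpha> \<gamma>"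
  shows "VR_lt_dir a r X (ell_param a \<alpha>) u
    \<longleftrightarrow> ell_param a \<alpha> \<in> X \<and> u \<in> X \<and> (\<exists>s. 0 < s \<and> s < \<gamma> \<and> u = ell_param a (\<alpha> + s))"
proof -
  have a0: "a \<noteq> 0" using a by simp
  have \<gamma>0: "0 < \<gamma>" using \<gamma> unfolding first_reach_angle_def by simp
  have "\<gamma> < pi" using first_reach_angle_less_pi[OF _ _ r(2) \<gamma>] a r by simp
  then have \<gamma>2: "\<gamma> < 2 * pi" using pi_gt_zero by linarith
  have "ell_param a \<alpha> \<noteq> ell_param a (\<alpha> + s) \<and> dist (ell_param a \<alpha>) (ell_param a (\<alpha> + s)) < r"
    if "0 < s" "s < \<gamma>" for s
    using ell_param_add_neq[OF a0 that(1), of \<alpha>] dist_ell_param_less_iff[of r a \<alpha> s] that \<gamma>2 \<gamma> r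
    unfolding first_reach_angle_def by auto
  then show ?thesis
    unfolding VR_lt_dir_def g_r_eq_first_reach[OF a r \<gamma>] cw_arc_open_ell_param[OF a0 \<gamma>0 \<gamma>2]
    by blast
qed

lemma VR_le_dir_ell_param:
  assumes a: "1 < a" "a\<^sup>2 \<le> 2" and r: "0 < r" "r < 2"
    and \<gamma>: "first_reach_angle a r \<alpha> \<gamma>"
  shows "VR_le_dir a r X (ell_param a \<alpha>) u
    \<longleftrightarrow> ell_param a \<alpha> \<in> X \<and> u \<in> X \<and> (\<exists>s. 0 < s \<and> s \<le> \<gamma> \<and> u = ell_param a (\<alpha> + s))"
proof -
  have a0: "a \<noteq> 0" using a by simp
  have \<gamma>0: "0 < \<gamma>" using \<gamma> unfolding first_reach_angle_def by simp
  have "\<gamma> < pi" using first_reach_angle_less_pi[OF _ _ r(2) \<gamma>] a r by simp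
  then have \<gamma>2: "\<gamma> < 2 * pi" using pi_gt_zero by linarith
  have "ell_param a \<alpha> \<noteq> ell_param a (\<alpha> + s) \<and> dist (ell_param a \<alpha>) (ell_param a (\<alpha> + s)) \<le> r"
    if "0 < s" "s \<le> \<gamma>" for s
    using ell_param_add_neq[OF a0 that(1), of \<alpha>] dist_ell_param_le_iff[of r a \<alpha> s]
      first_reach_angle_le[OF \<gamma> that] that \<gamma>2 r by auto
  then show ?thesis
    unfolding VR_le_dir_def g_r_eq_first_reach[OF a r \<gamma>] cw_arc_half_ell_param[OF a0 \<gamma>0 \<gamma>2]
    by blast
qed

section \<open>Cyclic graphs\<close>

text \<open>\<open>cmp\<close> selects whether the arcs of out-neighbours are open or closed at their far end.\<close>
lemma cyclic_graph_of_forward_arcs: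
  fixes \<rho> :: "real \<Rightarrow> real" and cmp :: "real \<Rightarrow> real \<Rightarrow> bool"
  assumes a0: "a \<noteq> 0" and V: "V \<subseteq> ellipse a"
    and cmp: "cmp = (<) \<or> cmp = (\<le>)"
    and \<rho>: "\<And>\<alpha>. 0 < \<rho> \<alpha> \<and> \<rho> \<alpha> < pi"
    and advance: "\<And>\<alpha> s. 0 < s \<Longrightarrow> s < \<rho> \<alpha> \<Longrightarrow> \<rho> \<alpha> \<le> s + \<rho> (\<alpha> + s)"
    and E_V: "\<And>v u. E v u \<Longrightarrow> v \<in> V \<and> u \<in> V"
    and E: "\<And>\<alpha> u. E (ell_param a \<alpha>) u
      \<longleftrightarrow> ell_param a \<alpha> \<in> V \<and> u \<in> V \<and> (\<exists>s. 0 < s \<and> cmp s (\<rho> \<alpha>) \<and> u = ell_param a (\<alpha> + s))"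
  shows "cyclic_graph a V E"
proof -
  have cmp_le: "cmp x y \<Longrightarrow> x \<le> y" for x y using cmp by auto
  have param: "\<exists>\<alpha>. v = ell_param a \<alpha>" if "E v u" for v u
    using E_V[OF that] V ell_param_surj[OF a0] by (metis subsetD)
  have step: "\<exists>s. 0 < s \<and> s < pi \<and> cmp s (\<rho> \<alpha>) \<and> u = ell_param a (\<alpha> + s)"
    if "E (ell_param a \<alpha>) u" for \<alpha> u
    using that E \<rho>[of \<alpha>] cmp_le by fastforce
  have no_2cycle: "\<not> (E v u \<and> E u v)" for u v
  proof
    assume vu: "E v u \<and> E u v"
    then obtain \<alpha> where v: "v = ell_param a \<alpha>" using param by blast
    then obtain s where s: "0 < s" "s < pi" "u = ell_param a (\<alpha> + s)" using step vu by blast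
    then obtain s' where "0 < s'" "s' < pi" "v = ell_param a (\<alpha> + s + s')"
      using step[of "\<alpha> + s" v] vu by blast
    then show False using ell_param_add_neq[OF a0, of "s + s'" \<alpha>] v s by (simp add: add.assoc)
  qed
  moreover have "E v w \<and> E w u"
    if vu: "E v u" and wV: "w \<in> V" and arc: "w \<in> cw_arc_open a v u" for v u w
  proof -
    obtain \<alpha> where v: "v = ell_param a \<alpha>" using param vu by blast
    then obtain s where s: "0 < s" "s < pi" "cmp s (\<rho> \<alpha>)" and u: "u = ell_param a (\<alpha> + s)"
      using step vu by blast
    obtain s1 where s1: "0 < s1" "s1 < s" and w: "w = ell_param a (\<alpha> + s1)"
      using arc cw_arc_open_ell_param[OF a0 s(1), of w \<alpha>] s(2) pi_gt_zero v u by auto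
    have "cmp s1 (\<rho> \<alpha>)" using s(3) s1 cmp by auto
    moreover have "\<rho> \<alpha> \<le> s1 + \<rho> (\<alpha> + s1)" using advance s1 cmp_le[OF s(3)] by simp
    then have "cmp (s - s1) (\<rho> (\<alpha> + s1))" using s(3) cmp by auto
    moreover have "u = ell_param a (\<alpha> + s1 + (s - s1))" using u by simp
    moreover have "v \<in> V" "u \<in> V" using E_V[OF vu] by auto
    ultimately show ?thesis
      unfolding v w using E wV w s1 by (metis diff_gt_0_iff_gt)
  qed
  ultimately show ?thesis unfolding cyclic_graph_def using E_V no_2cycle[of v v for v] by blast
qed

theorem mainTheorem19:
  fixes a r :: real and X :: "(real \<times> real) set"
  assumes "1 < a" and "a \<le> sqrt 2"
    and "X \<subseteq> ellipse a"
    and "0 < r" and "r < 2"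
  shows "cyclic_graph a X (VR_lt_dir a r X) \<and> cyclic_graph a X (VR_le_dir a r X)"
proof -
  note a = assms(1) and r = assms(4,5)
  have a0: "a \<noteq> 0" using a by simp
  have a2: "a\<^sup>2 \<le> 2" using assms(1,2) power_mono[of a "sqrt 2" 2] by simp
  obtain \<rho> where \<rho>: "\<And>\<alpha>. first_reach_angle a r \<alpha> (\<rho> \<alpha>)"
    using choice[of "first_reach_angle a r"] first_reach_angle_exists[OF a a2 r] by metis
  have bounds: "0 < \<rho> \<alpha> \<and> \<rho> \<alpha> < pi" for \<alpha>
    using \<rho>[of \<alpha>] first_reach_angle_less_pi[OF _ _ r(2) \<rho>] a r
    unfolding first_reach_angle_def by simp
  have advance: "\<rho> \<alpha> \<le> s + \<rho> (\<alpha> + s)" if "0 < s" "s < \<rho> \<alpha>" for \<alpha> s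
    using first_reach_angle_advance[OF a a2 r \<rho> \<rho> that] by simp
  have E_lt: "VR_lt_dir a r X v u \<Longrightarrow> v \<in> X \<and> u \<in> X"
    and E_le: "VR_le_dir a r X v u \<Longrightarrow> v \<in> X \<and> u \<in> X" for v u
    by (simp_all add: VR_lt_dir_def VR_le_dir_def)
  have "cyclic_graph a X (VR_lt_dir a r X)"
    by (rule cyclic_graph_of_forward_arcs[where cmp = "(<)" and E = "VR_lt_dir a r X",
          OF a0 assms(3) _ bounds advance E_lt VR_lt_dir_ell_param[OF a a2 r \<rho>]]) simp
  moreover have "cyclic_graph a X (VR_le_dir a r X)"
    by (rule cyclic_graph_of_forward_arcs[where cmp = "(\<le>)" and E = "VR_le_dir a r X",
          OF a0 assms(3) _ bounds advance E_le VR_le_dir_ell_param[OF a a2 r \<rho>]]) simp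
  ultimately show ?thesis ..
qed

end
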